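(* Assume the setting described in the context (quadratic nonlinearity with exponentially decaying semigroup estimators). Let $f_0\in F$ and $\varphi_{ap}\in C([0,+\infty),F)$, and suppose there are constants $E,D\in[0,+\infty)$ such that for all $t\ge0$: $\|E(\varphi_{ap})(t)\|\le Ee^{-Bt}$, where $E(\varphi_{ap})(t):=\varphi_{ap}(t)-e^{t\mathcal A}f_0-\int_0^te^{(t-s)\mathcal A}\mathcal P(\varphi_{ap}(s),s)\,ds$, and $\|\varphi_{ap}(t)\|\le De^{-Bt}$. Assume $2\sqrt{KNE}+2KND\le1$. Then VP$(f_0)$ has a global solution $\varphi:[0,+\infty)\to F$ and, for all $t\ge0$, $\|\varphi(t)-\varphi_{ap}(t)\|\le Re^{-Bt}$, where $$R:=\frac{1-2KND-\sqrt{(1-2KND)^2-4KNE}}{2KN}.$$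
   Context: Banach spaces over a common field. $X\hookrightarrow Y$ means $X$ is a dense subspace of $Y$ with continuous inclusion. Setting: $F_+,F,F_-$ Banach spaces with norms $\|\cdot\|_+,\|\cdot\|,\|\cdot\|_-$, $F_+\hookrightarrow F\hookrightarrow F_-$; $\mathcal A:F_+\to F_-$ linear with $\|\cdot\|_+$ equivalent on $F_+$ to $\|f\|_-+\|\mathcal Af\|_-$; $\mathcal A$ generates a strongly continuous semigroup $(e^{t\mathcal A})_{t\ge0}$ on $F_-$ (domain $F_+$); $e^{t\mathcal A}(F)\subset F$ ($t\ge0$) with $(f,t)\mapsto e^{t\mathcal A}f$ continuous $F\times[0,\infty)\to F$; $e^{t\mathcal A}(F_-)\subset F$ ($t>0$) with $(f,t)\mapsto e^{t\mathcal A}f$ continuous $F_-\times(0,\infty)\to F$. There are constants $B\ge0$, $N>0$ such that $\|e^{t\mathcal A}f\|\le e^{-Bt}\|f\|$ for $t\ge0$, $f\in F$, and $\|e^{t\mathcal A}f\|\le\mu_-(t)e^{-Bt}\|f\|_-$ for $t>0$, $f\in F_-$, where $\mu_-\in C((0,\infty),(0,\infty))$, $\mu_-(t)=O(t^{-(1-\sigma)})$ as $t\to0^+$ for some $\sigma\in(0,1]$, and $\int_0^t\mu_-(t-s)e^{-Bs}ds\le N$ for all $t\ge0$. $\mathscr P:F\times F\to F_-$ bilinear with $\|\mathscr P(f,g)\|_-\le K\|f\|\|g\|$, $K\in(0,\infty)$; $\xi:[0,+\infty)\to F_-$ locally Lipschitz; $\mathcal P(f,t):=\mathscr P(f,f)+\xi(t)$.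 VP$(f_0)$ asks for $\varphi\in C([0,T),F)$ with $\varphi(t)=e^{t\mathcal A}f_0+\int_0^te^{(t-s)\mathcal A}\mathcal P(\varphi(s),s)\,ds$ for $t\in[0,T)$. *)

theory Defs
  imports "HOL-Analysis.Analysis" "HOL-Library.Landau_Symbols"
begin

definition strongly_continuous_semigroup :: "(real \<Rightarrow> 'm::banach \<Rightarrow> 'm) \<Rightarrow> bool" where
  "strongly_continuous_semigroup T \<longleftrightarrow>
     (\<forall>t\<ge>0. bounded_linear (T t)) \<and>
     T 0 = id \<and>
     (\<forall>s\<ge>0. \<forall>t\<ge>0. T (s + t) = T s \<circ> T t) \<and>
     (\<forall>x. continuous_on {0..} (\<lambda>t. T t x))"

text \<open>A (with domain the range of the embedding j) is the infinitesimal generator of T: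
  the domain is exactly the set of x for which the right difference quotient converges,
  and on it the limit is A.\<close>
definition is_generator ::
  "(real \<Rightarrow> 'm::banach \<Rightarrow> 'm) \<Rightarrow> ('p \<Rightarrow> 'm) \<Rightarrow> ('p \<Rightarrow> 'm) \<Rightarrow> bool" where
  "is_generator T j A \<longleftrightarrow>
     (\<forall>p. ((\<lambda>h. (1 / h) *\<^sub>R (T h (j p) - j p)) \<longlongrightarrow> A p) (at_right 0)) \<and>
     (\<forall>x. (\<exists>y. ((\<lambda>h. (1 / h) *\<^sub>R (T h x - x)) \<longlongrightarrow> y) (at_right 0)) \<longrightarrow> x \<in> range j)"

definition dense_embedding :: "('a::real_normed_vector \<Rightarrow> 'b::real_normed_vector) \<Rightarrow> bool" where
  "dense_embedding i \<longleftrightarrow> bounded_linear i \<and> inj i \<and> closure (range i) = UNIV"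

end

theory Submission
  imports Defs
begin

text \<open>
  The solution is a fixed point of the mild map
  \<open>\<Phi> \<phi> t = exp(tA) f0 + \<integral>\<^sub>0\<^sup>t exp((t-s)A) P(\<phi> s, s) ds\<close>
  on the set of continuous \<open>\<phi>\<close> with \<open>norm (\<phi> t - \<phi>ap t) \<le> R exp(-Bt)\<close>.
  Since \<open>P(\<phi>) - P(\<phi>ap) = Pb (\<phi> - \<phi>ap) \<phi> + Pb \<phi>ap (\<phi> - \<phi>ap)\<close>, the kernel bound
  \<open>\<integral>\<^sub>0\<^sup>t \<mu>(t-s) exp(-Bs) ds \<le> N\<close> shows that \<open>\<Phi>\<close> preserves this set as soon as
  \<open>E + KN(2DR + R\<^sup>2) \<le> R\<close>; the given \<open>R\<close> is the smaller root of this quadratic, which is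
  real by the smallness condition. On the set, \<open>\<Phi>\<close> is Lipschitz with constant
  \<open>2KN(D + R) \<le> 1\<close> for the \<open>exp(-Bt)\<close>-weighted sup norm, which need not be a contraction.
  With the weight \<open>exp((\<gamma> - B)t)\<close> instead, for \<open>\<gamma>\<close> so large that the correspondingly damped
  kernel integral stays below \<open>N/2\<close>, \<open>\<Phi>\<close> becomes a \<open>1/2\<close>-contraction, and the Picard
  iterates starting from \<open>\<phi>ap\<close> converge locally uniformly to the solution.
\<close>

lemma integrable_on_Icc_if_bigo_powr:
  fixes \<mu> :: "real \<Rightarrow> real"
  assumes big: "\<mu> \<in> O[at_right 0](\<lambda>t. t powr (- (1 - \<sigma>)))"
    and cont: "continuous_on {0<..} \<mu>" and \<sigma>: "\<sigma> > 0" and a: "a \<ge> 0"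
  shows "\<mu> integrable_on {0..a}"
proof -
  obtain c where c: "c > 0" "eventually (\<lambda>x. norm (\<mu> x) \<le> c * norm (x powr (- (1 - \<sigma>)))) (at_right 0)"
    using landau_o.bigE[OF big] by blast
  then obtain r where r: "r > 0" "\<And>x. 0 < x \<Longrightarrow> x < r \<Longrightarrow> \<bar>\<mu> x\<bar> \<le> c * x powr (\<sigma> - 1)"
    by (auto simp: eventually_at_right_field)
  have "compact (\<mu> ` {r/2..max a (r/2)})"
    by (rule compact_continuous_image, rule continuous_on_subset[OF cont]) (use r in auto)
  then obtain M where M: "M > 0" "\<And>x. x \<in> {r/2..max a (r/2)} \<Longrightarrow> \<bar>\<mu> x\<bar> \<le> M"
    by (metis compact_imp_bounded bounded_pos imageI real_norm_def)
  define g where "g x = c * x powr (\<sigma> - 1) + M" for x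
  have "g integrable_on {0..a}"
    unfolding g_def using \<sigma> a
    by (intro integrable_add integrable_on_mult_right integrable_on_powr_from_0) auto
  then have "g integrable_on {0<..a}"
    by (rule integrable_spike_set) (auto intro: negligible_subset[of "{0}"])
  moreover have "\<mu> \<in> borel_measurable (lebesgue_on {0<..a})"
    by (rule continuous_imp_measurable_on_sets_lebesgue) (auto intro: continuous_on_subset[OF cont])
  moreover have "norm (\<mu> x) \<le> g x" if x: "x \<in> {0<..a}" for x
  proof (cases "x < r")
    case True
    then show ?thesis using r(2)[of x] x M(1) by (simp add: g_def)
  next
    case False
    then have "\<bar>\<mu> x\<bar> \<le> M" using M(2)[of x] x r(1) by auto
    moreover have "c * x powr (\<sigma> - 1) \<ge> 0" using c(1) by simp
    ultimately show ?thesis by (simp add: g_def)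
  qed
  ultimately have "\<mu> integrable_on {0<..a}"
    using measurable_bounded_by_integrable_imp_integrable[of \<mu> "{0<..a}" g] by simp
  then show ?thesis
    by (rule integrable_spike_set) (auto intro: negligible_subset[of "{0}"])
qed

lemma uniformly_continuous_on_primitive_if_dominated:
  fixes f :: "real \<Rightarrow> 'a::banach"
  assumes fc: "continuous_on {a..<b} f" and gi: "g integrable_on {a..b}"
    and le: "\<And>x. x \<in> {a..<b} \<Longrightarrow> norm (f x) \<le> g x"
  shows "uniformly_continuous_on {a..<b} (\<lambda>x. integral {a..x} f)"
proof -
  define G where "G x = integral {a..x} f" for x
  define Gg where "Gg x = integral {a..x} g" for x
  have ordered: "dist (G y) (G x) \<le> dist (Gg y) (Gg x)" if "a \<le> x" "x \<le> y" "y < b" for x y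
  proof -
    have fi: "f integrable_on {a..y}"
      by (rule integrable_continuous_interval, rule continuous_on_subset[OF fc]) (use that in auto)
    have "G y - G x = integral {x..y} f"
      using Henstock_Kurzweil_Integration.integral_combine[OF that(1,2) fi] by (simp add: G_def algebra_simps)
    also have "norm \<dots> \<le> integral {x..y} g"
      by (rule integral_norm_bound_integral)
         (use that in \<open>auto intro: integrable_on_subinterval[OF fi] integrable_on_subinterval[OF gi] le\<close>)
    also have "\<dots> = Gg y - Gg x"
      using Henstock_Kurzweil_Integration.integral_combine[OF that(1,2) integrable_on_subinterval[OF gi, of a y]] that
      by (simp add: Gg_def algebra_simps)
    finally show ?thesis by (simp add: dist_norm dist_real_def)
  qed
  have dominated: "dist (G y) (G x) \<le> dist (Gg y) (Gg x)" if "x \<in> {a..<b}" "y \<in> {a..<b}" for x y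
    using ordered[of x y] ordered[of y x] that by (cases "x \<le> y") (auto simp: dist_commute)
  have "uniformly_continuous_on {a..b} Gg"
    unfolding Gg_def
    by (rule compact_uniformly_continuous[OF indefinite_integral_continuous_1[OF gi]]) simp
  show ?thesis
    unfolding uniformly_continuous_on_def
  proof (intro allI impI)
    fix e :: real assume "e > 0"
    then obtain d where "d > 0"
      and d: "\<And>x x'. x \<in> {a..b} \<Longrightarrow> x' \<in> {a..b} \<Longrightarrow> dist x' x < d \<Longrightarrow> dist (Gg x') (Gg x) < e"
      using \<open>uniformly_continuous_on {a..b} Gg\<close> unfolding uniformly_continuous_on_def by metis
    show "\<exists>d>0. \<forall>x\<in>{a..<b}. \<forall>x'\<in>{a..<b}.
            dist x' x < d \<longrightarrow> dist (integral {a..x'} f) (integral {a..x} f) < e"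
    proof (intro exI[of _ d] conjI ballI impI \<open>d > 0\<close>)
      fix x x' assume "x \<in> {a..<b}" "x' \<in> {a..<b}" "dist x' x < d"
      then have "dist (G x') (G x) < e"
        using dominated[of x x'] d[of x x'] by (auto intro: le_less_trans)
      then show "dist (integral {a..x'} f) (integral {a..x} f) < e"
        by (simp add: G_def)
    qed
  qed
qed

lemma has_integral_Icc_if_primitive_tendsto:
  fixes f :: "real \<Rightarrow> 'a::banach"
  assumes ab: "a < b" and fc: "continuous_on {a..<b} f"
    and lim: "((\<lambda>x. integral {a..x} f) \<longlongrightarrow> l) (at b within {a..<b})"
  shows "(f has_integral l) {a..b}"
proof -
  define H where "H x = (if x = b then l else integral {a..x} f)" for x
  have primitive: "(H has_vector_derivative f x) (at x within {a..c})"
    if "a \<le> x" "x \<le> c" "c < b" for x c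
  proof -
    have "((\<lambda>x. integral {a..x} f) has_vector_derivative f x) (at x within {a..c})"
      by (rule integral_has_vector_derivative, rule continuous_on_subset[OF fc]) (use that in auto)
    then show ?thesis
      by (rule has_vector_derivative_transform[rotated 2]) (use that in \<open>auto simp: H_def\<close>)
  qed
  have "continuous (at x within {a..b}) H" if x: "x \<in> {a..b}" for x
  proof (cases "x = b")
    case True
    have "eventually (\<lambda>y. integral {a..y} f = H y) (at b within {a..<b})"
      unfolding eventually_at_filter by (intro always_eventually) (auto simp: H_def)
    with lim have "(H \<longlongrightarrow> l) (at b within {a..<b})"
      by (rule Lim_transform_eventually)
    moreover have "at b within {a..b} = at b within {a..<b}"
      by (rule at_within_nhd[of _ UNIV]) auto
    ultimately show ?thesis using True by (simp add: continuous_within H_def)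
  next
    case False
    define c where "c = (x + b) / 2"
    have "continuous (at x within {a..c}) H"
      using primitive[of x c] x False
      by (auto simp: c_def intro: has_vector_derivative_continuous)
    moreover have "at x within {a..b} = at x within {a..c}"
      by (rule at_within_nhd[of _ "{..<c}"]) (use x False in \<open>auto simp: c_def\<close>)
    ultimately show ?thesis by simp
  qed
  then have "continuous_on {a..b} H"
    by (simp add: continuous_on_eq_continuous_within)
  then have "(f has_integral (H b - H a)) {a..b}"
  proof (rule fundamental_theorem_of_calculus_interior[OF less_imp_le[OF ab]])
    fix x assume x: "x \<in> {a<..<b}"
    define c where "c = (x + b) / 2"
    have "at x within {a..c} = at x"
      by (rule at_within_open_subset[of _ "{a<..<c}"]) (use x in \<open>auto simp: c_def\<close>)
    then show "(H has_vector_derivative f x) (at x)"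
      using primitive[of x c] x by (auto simp: c_def)
  qed
  then show ?thesis using ab by (simp add: H_def)
qed

lemma integrable_on_Icc_if_dominated_on_Ico:
  fixes f :: "real \<Rightarrow> 'a::banach"
  assumes ab: "a \<le> b" and fc: "continuous_on {a..<b} f" and gi: "g integrable_on {a..b}"
    and le: "\<And>x. x \<in> {a..<b} \<Longrightarrow> norm (f x) \<le> g x"
  shows "f integrable_on {a..b}" and "norm (integral {a..b} f) \<le> integral {a..b} g"
proof -
  show fi: "f integrable_on {a..b}"
  proof (cases "a = b")
    case False
    obtain l where "((\<lambda>x. integral {a..x} f) \<longlongrightarrow> l) (at b within {a..<b})"
      using uniformly_continuous_on_extension_at_closure
        [OF uniformly_continuous_on_primitive_if_dominated[OF fc gi le], of b] ab False
      by auto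
    then show ?thesis
      using has_integral_Icc_if_primitive_tendsto[OF _ fc] ab False by fastforce
  qed (use integrable_on_refl[of f b] in simp)
  have endpoint: "negligible ({a..b} - {a..<b})" "negligible ({a..<b} - {a..b})"
    by (auto intro: negligible_subset[of "{b}"])
  have "norm (integral {a..<b} f) \<le> integral {a..<b} g"
    using fi gi integrable_spike_set_eq[OF negligible_Un[OF endpoint], of f]
      integrable_spike_set_eq[OF negligible_Un[OF endpoint], of g]
    by (intro integral_norm_bound_integral le) auto
  moreover have "integral {a..<b} h = integral {a..b} h" for h :: "real \<Rightarrow> 'b::banach"
    by (rule integral_spike_set) (auto intro: negligible_subset[OF endpoint(1)] negligible_subset[OF endpoint(2)])
  ultimately show "norm (integral {a..b} f) \<le> integral {a..b} g" by metis
qed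

lemma has_integral_reflect_shift:
  fixes f :: "real \<Rightarrow> 'a::banach"
  assumes "(f has_integral I) {0..t - b}"
  shows "((\<lambda>s. f (t - s)) has_integral I) {b..t}"
proof -
  have "((f \<circ> (+) t) has_integral I) {-t..-b}"
    using assms by (subst has_integral_shift_Icc_real) simp
  then have "((\<lambda>x. (f \<circ> (+) t) (-x)) has_integral I) {- (-b)..- (-t)}"
    by (subst has_integral_reflect_real) simp
  then show ?thesis by (simp add: o_def)
qed

lemma continuous_on_atLeast_if_Icc:
  fixes f :: "real \<Rightarrow> 'a::topological_space"
  assumes "\<And>T. T \<ge> 0 \<Longrightarrow> continuous_on {0..T} f"
  shows "continuous_on {0..} f"
  unfolding continuous_on_eq_continuous_within
proof
  fix x :: real assume x: "x \<in> {0..}"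
  have "continuous (at x within {0..x+1}) f"
    using assms[of "x+1"] x by (auto simp: continuous_on_eq_continuous_within)
  moreover have "at x within {0..} = at x within {0..x+1}"
    by (rule at_within_nhd[of _ "{..<x+1}"]) auto
  ultimately show "continuous (at x within {0..}) f" by (simp add: continuous_within)
qed

lemma geometric_increments_limit:
  fixes x :: "nat \<Rightarrow> 'a::banach"
  assumes inc: "\<And>n. norm (x (Suc n) - x n) \<le> C * (1/2)^n"
  shows "\<exists>L. x \<longlonglongrightarrow> L \<and> (\<forall>n. norm (x n - L) \<le> 2 * C * (1/2)^n)"
proof -
  define d where "d n = x (Suc n) - x n" for n
  have geo: "summable (\<lambda>n. C * (1/2::real)^n)"
    by (intro summable_mult summable_geometric) simp
  have norm_d: "summable (\<lambda>n. norm (d n))"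
    by (rule summable_comparison_test[OF _ geo]) (use inc in \<open>auto simp: d_def\<close>)
  have partial: "x n = x 0 + (\<Sum>k<n. d k)" for n
    unfolding d_def sum_lessThan_telescope by simp
  have "(\<lambda>n. x 0 + (\<Sum>k<n. d k)) \<longlonglongrightarrow> x 0 + suminf d"
    by (intro tendsto_add tendsto_const summable_LIMSEQ summable_norm_cancel[OF norm_d])
  then have "x \<longlonglongrightarrow> x 0 + suminf d"
    by (simp only: partial[symmetric])
  moreover have "norm (x n - (x 0 + suminf d)) \<le> 2 * C * (1/2)^n" for n
  proof -
    have split: "suminf d = (\<Sum>k. d (k + n)) + (\<Sum>k<n. d k)"
      by (rule suminf_split_initial_segment[OF summable_norm_cancel[OF norm_d]])
    have tail: "x n - (x 0 + suminf d) = - (\<Sum>k. d (k + n))"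
      by (subst partial[of n], subst split) (simp add: algebra_simps)
    have shifted: "summable (\<lambda>k. norm (d (k + n)))"
      by (rule summable_iff_shift[THEN iffD2, OF norm_d])
    have "norm (\<Sum>k. d (k + n)) \<le> (\<Sum>k. norm (d (k + n)))"
      by (rule summable_norm[OF shifted])
    also have "\<dots> \<le> (\<Sum>k. C * (1/2)^n * (1/2)^k)"
    proof (intro suminf_le summable_mult summable_geometric shifted)
      show "norm (d (k + n)) \<le> C * (1/2)^n * (1/2)^k" for k
        using inc[of "k + n"] by (simp add: d_def power_add mult_ac)
    qed simp
    also have "\<dots> = 2 * C * (1/2)^n"
      by (subst suminf_mult) (auto simp: suminf_geometric)
    finally show ?thesis by (simp add: tail)
  qed
  ultimately show ?thesis by blast
qed

lemma uniform_limit_if_dist_le: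
  assumes "\<And>n x. x \<in> S \<Longrightarrow> dist (f n x) (g x) \<le> b n" and "b \<longlonglongrightarrow> 0"
  shows "uniform_limit S f g sequentially"
  unfolding uniform_limit_iff
proof (intro allI impI)
  fix e :: real assume "e > 0"
  then have "eventually (\<lambda>n. b n < e) sequentially"
    using assms(2) by (intro order_tendstoD(2)) auto
  then show "\<forall>\<^sub>F n in sequentially. \<forall>x\<in>S. dist (f n x) (g x) < e"
    by eventually_elim (use assms(1) le_less_trans in blast)
qed

lemma linear_if_inj_comp_linear:
  assumes i: "linear i" "inj i" and L: "linear L" and comm: "\<And>x. i (S x) = L x"
  shows "linear S"
proof (rule linearI)
  show "S (x + y) = S x + S y" for x y
    using comm[of "x + y"] comm[of x] comm[of y]
    by (intro injD[OF i(2)]) (simp add: linear_add[OF i(1)] linear_add[OF L])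
  show "S (c *\<^sub>R x) = c *\<^sub>R S x" for c x
    using comm[of "c *\<^sub>R x"] comm[of x]
    by (intro injD[OF i(2)]) (simp add: linear_scale[OF i(1)] linear_scale[OF L])
qed

locale duhamel_kernel =
  fixes Sm :: "real \<Rightarrow> 'm::banach \<Rightarrow> 'f::banach" and \<mu> :: "real \<Rightarrow> real" and B N :: real
  assumes Sm_linear: "\<And>t. t > 0 \<Longrightarrow> linear (Sm t)"
    and Sm_continuous: "continuous_on (UNIV \<times> {0<..}) (\<lambda>(g, t). Sm t g)"
    and norm_Sm_le: "\<And>t g. t > 0 \<Longrightarrow> norm (Sm t g) \<le> \<mu> t * exp (- B * t) * norm g"
    and \<mu>_continuous: "continuous_on {0<..} \<mu>"
    and \<mu>_nonneg: "\<And>t. \<mu> t \<ge> 0"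
    and \<mu>_integrable: "\<And>a. a \<ge> 0 \<Longrightarrow> \<mu> integrable_on {0..a}"
    and B_nonneg: "B \<ge> 0"
    and N_pos: "N > 0"
    and \<mu>_convolution_le: "\<And>t. t \<ge> 0 \<Longrightarrow> integral {0..t} (\<lambda>s. \<mu> (t - s) * exp (- B * s)) \<le> N"
begin

definition duhamel :: "(real \<Rightarrow> 'm) \<Rightarrow> real \<Rightarrow> 'f" where
  "duhamel y t = integral {0..t} (\<lambda>s. Sm (t - s) (y s))"

definition kernel_mass :: "real \<Rightarrow> real \<Rightarrow> real" where
  "kernel_mass \<gamma> t = integral {0..t} (\<lambda>s. \<mu> (t - s) * (exp (- \<gamma> * (t - s)) * exp (- B * s)))"

lemma \<mu>_reflect:
  assumes "a \<le> t"
  shows "(\<lambda>s. \<mu> (t - s)) integrable_on {a..t}"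
    and "integral {a..t} (\<lambda>s. \<mu> (t - s)) = integral {0..t - a} \<mu>"
  using has_integral_reflect_shift[OF integrable_integral[OF \<mu>_integrable[of "t - a"]]] assms
  by (auto simp: integrable_on_def integral_unique)

lemma integral_\<mu>_small:
  assumes "e > 0"
  obtains \<eta> where "\<eta> > 0" "\<And>x. 0 \<le> x \<Longrightarrow> x \<le> \<eta> \<Longrightarrow> integral {0..x} \<mu> < e"
proof -
  have "continuous_on {0..1} (\<lambda>x. integral {0..x} \<mu>)"
    by (rule indefinite_integral_continuous_1[OF \<mu>_integrable]) simp
  then obtain d where d: "d > 0"
    "\<And>x. x \<in> {0..1} \<Longrightarrow> dist x 0 < d \<Longrightarrow> dist (integral {0..x} \<mu>) (integral {0..0} \<mu>) < e"
    unfolding continuous_on_iff using assms by (metis atLeastAtMost_iff order_refl zero_le_one)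
  show ?thesis
    by (rule that[of "min 1 (d/2)"]) (use d in \<open>auto simp: dist_real_def abs_less_iff\<close>)
qed

lemma \<mu>_convolution_integrable:
  assumes at: "a \<le> t" and hc: "continuous_on {a..t} h"
  shows "(\<lambda>s. \<mu> (t - s) * h s) integrable_on {a..t}"
proof -
  obtain H where H: "\<And>s. s \<in> {a..t} \<Longrightarrow> norm (h s) \<le> H"
    using compact_imp_bounded[OF compact_continuous_image[OF hc compact_Icc]]
    by (metis bounded_iff imageI)
  show ?thesis
  proof (rule integrable_on_Icc_if_dominated_on_Ico(1)[OF at])
    show "continuous_on {a..<t} (\<lambda>s. \<mu> (t - s) * h s)"
      by (intro continuous_on_mult continuous_on_compose2[OF \<mu>_continuous] continuous_intros
            continuous_on_subset[OF hc]) auto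
    show "(\<lambda>s. H * \<mu> (t - s)) integrable_on {a..t}"
      by (intro integrable_on_mult_right \<mu>_reflect(1)[OF at])
    show "norm (\<mu> (t - s) * h s) \<le> H * \<mu> (t - s)" if "s \<in> {a..<t}" for s
      using H[of s] that \<mu>_nonneg[of "t - s"]
      by (simp add: abs_mult mult.commute[of H] mult_left_mono)
  qed
qed

lemma Sm_convolution_dominated:
  fixes y :: "real \<Rightarrow> 'm"
  assumes at: "a \<le> t" and yc: "continuous_on {a..t} y"
  shows "(\<lambda>s. Sm (t - s) (y s)) integrable_on {a..t}"
    and "norm (integral {a..t} (\<lambda>s. Sm (t - s) (y s)))
       \<le> integral {a..t} (\<lambda>s. \<mu> (t - s) * (exp (- B * (t - s)) * norm (y s)))"
proof -
  have "continuous_on {a..<t} (\<lambda>s. (\<lambda>(g, t). Sm t g) (y s, t - s))"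
    by (rule continuous_on_compose2[OF Sm_continuous])
       (auto intro!: continuous_intros intro: continuous_on_subset[OF yc])
  then have cont: "continuous_on {a..<t} (\<lambda>s. Sm (t - s) (y s))" by simp
  have gi: "(\<lambda>s. \<mu> (t - s) * (exp (- B * (t - s)) * norm (y s))) integrable_on {a..t}"
    by (rule \<mu>_convolution_integrable[OF at]) (auto intro!: continuous_intros yc)
  have le: "norm (Sm (t - s) (y s)) \<le> \<mu> (t - s) * (exp (- B * (t - s)) * norm (y s))"
    if "s \<in> {a..<t}" for s
    using norm_Sm_le[of "t - s" "y s"] that by (simp add: mult.assoc)
  show "(\<lambda>s. Sm (t - s) (y s)) integrable_on {a..t}"
    and "norm (integral {a..t} (\<lambda>s. Sm (t - s) (y s)))
       \<le> integral {a..t} (\<lambda>s. \<mu> (t - s) * (exp (- B * (t - s)) * norm (y s)))"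
    using integrable_on_Icc_if_dominated_on_Ico[OF at cont gi le] by auto
qed

lemma norm_Sm_convolution_le_integral_\<mu>:
  fixes y :: "real \<Rightarrow> 'm"
  assumes at: "a \<le> t" and yc: "continuous_on {a..t} y"
    and Y: "\<And>s. s \<in> {a..t} \<Longrightarrow> norm (y s) \<le> Y"
  shows "norm (integral {a..t} (\<lambda>s. Sm (t - s) (y s))) \<le> Y * integral {0..t - a} \<mu>"
proof -
  have "norm (integral {a..t} (\<lambda>s. Sm (t - s) (y s)))
       \<le> integral {a..t} (\<lambda>s. \<mu> (t - s) * (exp (- B * (t - s)) * norm (y s)))"
    by (rule Sm_convolution_dominated(2)[OF at yc])
  also have "\<dots> \<le> integral {a..t} (\<lambda>s. Y * \<mu> (t - s))"
  proof (rule integral_le)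
    show "(\<lambda>s. \<mu> (t - s) * (exp (- B * (t - s)) * norm (y s))) integrable_on {a..t}"
      by (rule \<mu>_convolution_integrable[OF at]) (auto intro!: continuous_intros yc)
    show "(\<lambda>s. Y * \<mu> (t - s)) integrable_on {a..t}"
      by (intro integrable_on_mult_right \<mu>_reflect(1)[OF at])
    fix s assume s: "s \<in> {a..t}"
    have "exp (- B * (t - s)) * norm (y s) \<le> 1 * Y"
      using Y[OF s] s B_nonneg by (intro mult_mono) auto
    then show "\<mu> (t - s) * (exp (- B * (t - s)) * norm (y s)) \<le> Y * \<mu> (t - s)"
      using \<mu>_nonneg[of "t - s"] by (simp add: mult.commute[of Y] mult_left_mono)
  qed
  also have "\<dots> = Y * integral {0..t - a} \<mu>"
    using \<mu>_reflect(2)[OF at] by simp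
  finally show ?thesis .
qed

lemma norm_Sm_convolution_short:
  fixes y :: "real \<Rightarrow> 'm"
  assumes yc: "continuous_on {0..T} y" and e: "e > 0"
  obtains \<eta> where "\<eta> > 0" "\<And>a t. 0 \<le> a \<Longrightarrow> a \<le> t \<Longrightarrow> t \<le> T \<Longrightarrow> t - a \<le> \<eta>
    \<Longrightarrow> norm (integral {a..t} (\<lambda>s. Sm (t - s) (y s))) < e"
proof -
  obtain Y where Y: "Y > 0" "\<And>s. s \<in> {0..T} \<Longrightarrow> norm (y s) \<le> Y"
    using compact_imp_bounded[OF compact_continuous_image[OF yc compact_Icc]]
    by (metis bounded_pos imageI)
  obtain \<eta> where \<eta>: "\<eta> > 0" "\<And>x. 0 \<le> x \<Longrightarrow> x \<le> \<eta> \<Longrightarrow> integral {0..x} \<mu> < e / Y"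
    using integral_\<mu>_small[of "e / Y"] e Y(1) by auto
  show ?thesis
  proof (rule that[OF \<eta>(1)])
    fix a t assume at: "0 \<le> a" "a \<le> t" "t \<le> T" "t - a \<le> \<eta>"
    have "norm (integral {a..t} (\<lambda>s. Sm (t - s) (y s))) \<le> Y * integral {0..t - a} \<mu>"
      by (rule norm_Sm_convolution_le_integral_\<mu>)
         (use at in \<open>auto intro: Y(2) continuous_on_subset[OF yc]\<close>)
    also have "\<dots> < Y * (e / Y)"
      using \<eta>(2)[of "t - a"] at Y(1) by (intro mult_strict_left_mono) auto
    finally show "norm (integral {a..t} (\<lambda>s. Sm (t - s) (y s))) < e"
      using Y(1) by simp
  qed
qed

lemma continuous_on_Sm_convolution_head:
  fixes y :: "real \<Rightarrow> 'm"
  assumes yc: "continuous_on {0..a} y"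
  shows "continuous_on {a<..} (\<lambda>t. integral {0..a} (\<lambda>s. Sm (t - s) (y s)))"
proof -
  have "continuous_on ({a<..} \<times> cbox 0 a) (\<lambda>p. (\<lambda>(g, t). Sm t g) (y (snd p), fst p - snd p))"
  proof (rule continuous_on_compose2[OF Sm_continuous])
    show "continuous_on ({a<..} \<times> cbox 0 a) (\<lambda>p. (y (snd p), fst p - snd p))"
      by (intro continuous_intros continuous_on_compose2[OF yc]) (auto simp: cbox_interval)
  qed (auto simp: cbox_interval)
  then have "continuous_on ({a<..} \<times> cbox 0 a) (\<lambda>(t, s). Sm (t - s) (y s))"
    by (simp add: case_prod_beta)
  then show ?thesis
    using integral_continuous_on_param[of "{a<..}" 0 a "\<lambda>t s. Sm (t - s) (y s)"]
    by (simp add: cbox_interval)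
qed

lemma continuous_on_duhamel:
  assumes yc: "continuous_on {0..} y"
  shows "continuous_on {0..} (duhamel y)"
  unfolding continuous_on_iff
proof (intro ballI allI impI)
  fix t0 e :: real assume t0: "t0 \<in> {0..}" and e: "e > 0"
  obtain \<eta> where \<eta>: "\<eta> > 0" "\<And>a t. 0 \<le> a \<Longrightarrow> a \<le> t \<Longrightarrow> t \<le> t0 + 1 \<Longrightarrow> t - a \<le> \<eta>
      \<Longrightarrow> norm (integral {a..t} (\<lambda>s. Sm (t - s) (y s))) < e / 3"
    using norm_Sm_convolution_short[OF continuous_on_subset[OF yc], of "t0 + 1" "e / 3"] e by auto
  define \<delta> where "\<delta> = min 1 \<eta> / 2"
  have \<delta>: "\<delta> > 0" "\<delta> \<le> 1/2" "2 * \<delta> \<le> \<eta>" using \<eta>(1) by (auto simp: \<delta>_def)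
  \<comment> \<open>Away from the diagonal \<open>s = t\<close> the kernel is continuous; the part near it is uniformly small.\<close>
  define a where "a = max 0 (t0 - \<delta>)"
  define P where "P t = integral {0..a} (\<lambda>s. Sm (t - s) (y s))" for t
  have split: "duhamel y t = P t + integral {a..t} (\<lambda>s. Sm (t - s) (y s))" if "a \<le> t" for t
    unfolding duhamel_def P_def
    by (rule Henstock_Kurzweil_Integration.integral_combine[symmetric])
       (use that in \<open>auto simp: a_def intro!: Sm_convolution_dominated(1) continuous_on_subset[OF yc]\<close>)
  obtain d where d: "d > 0" "\<And>t. t \<ge> 0 \<Longrightarrow> dist t t0 < d \<Longrightarrow> dist (P t) (P t0) < e / 3"
  proof (cases "t0 \<le> \<delta>")
    case True
    then have "P t = 0" for t by (simp add: P_def a_def)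
    then show ?thesis using e by (intro that[of 1]) auto
  next
    case False
    have "continuous_on {a<..} P"
      unfolding P_def by (rule continuous_on_Sm_convolution_head, rule continuous_on_subset[OF yc]) auto
    moreover have "t0 \<in> {a<..}" using False \<delta> by (simp add: a_def)
    ultimately obtain d' where "d' > 0" "\<And>t. t \<in> {a<..} \<Longrightarrow> dist t t0 < d' \<Longrightarrow> dist (P t) (P t0) < e / 3"
      unfolding continuous_on_iff using e by (metis divide_pos_pos zero_less_numeral)
    then show ?thesis
      using False by (intro that[of "min d' \<delta>"]) (auto simp: a_def dist_real_def \<delta>)
  qed
  show "\<exists>d>0. \<forall>t\<in>{0..}. dist t t0 < d \<longrightarrow> dist (duhamel y t) (duhamel y t0) < e"
  proof (intro exI[of _ "min d \<delta>"] conjI ballI impI)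
    fix t assume t: "t \<in> {0..}" "dist t t0 < min d \<delta>"
    then have near: "a \<le> t" "t \<le> t0 + 1" "t - a \<le> 2 * \<delta>" "a \<le> t0" "t0 - a \<le> 2 * \<delta>"
      using t0 \<delta> by (auto simp: a_def dist_real_def)
    define I where "I \<tau> = integral {a..\<tau>} (\<lambda>s. Sm (\<tau> - s) (y s))" for \<tau>
    have "dist (duhamel y t) (duhamel y t0) = norm ((P t - P t0) + (I t - I t0))"
      unfolding split[OF near(1)] split[OF near(4)] dist_norm I_def by (simp add: algebra_simps)
    also have "\<dots> \<le> norm (P t - P t0) + (norm (I t) + norm (I t0))"
      by (rule order_trans[OF norm_triangle_ineq add_left_mono[OF norm_triangle_ineq4]])
    also have "\<dots> < e"
      using d(2)[of t] t \<eta>(2)[of a t] \<eta>(2)[of a t0] near t0 \<delta>(3)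
      by (auto simp: a_def I_def dist_norm)
    finally show "dist (duhamel y t) (duhamel y t0) < e" .
  qed (use d \<delta> in auto)
qed

lemma duhamel_diff:
  assumes t: "t \<ge> 0" and "continuous_on {0..t} y1" "continuous_on {0..t} y2"
  shows "duhamel y1 t - duhamel y2 t = duhamel (\<lambda>s. y1 s - y2 s) t"
proof -
  have "duhamel y1 t - duhamel y2 t = integral {0..t} (\<lambda>s. Sm (t - s) (y1 s) - Sm (t - s) (y2 s))"
    unfolding duhamel_def
    by (rule Henstock_Kurzweil_Integration.integral_diff[symmetric])
       (use assms in \<open>auto intro: Sm_convolution_dominated(1)\<close>)
  also have "\<dots> = duhamel (\<lambda>s. y1 s - y2 s) t"
    unfolding duhamel_def by (rule integral_spike[of "{t}"]) (auto simp: linear_diff[OF Sm_linear])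
  finally show ?thesis .
qed

lemma norm_duhamel_le_kernel_mass:
  assumes t: "t \<ge> 0" and yc: "continuous_on {0..t} y"
    and y: "\<And>s. s \<in> {0..t} \<Longrightarrow> norm (y s) \<le> C * exp ((\<gamma> - B) * s) * exp (- B * s)"
  shows "norm (duhamel y t) \<le> C * exp ((\<gamma> - B) * t) * kernel_mass \<gamma> t"
proof -
  have "norm (duhamel y t) \<le> integral {0..t} (\<lambda>s. \<mu> (t - s) * (exp (- B * (t - s)) * norm (y s)))"
    unfolding duhamel_def by (rule Sm_convolution_dominated(2)[OF t yc])
  also have "\<dots> \<le> integral {0..t}
      (\<lambda>s. \<mu> (t - s) * (exp (- B * (t - s)) * (C * exp ((\<gamma> - B) * s) * exp (- B * s))))"
    using y \<mu>_nonneg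
    by (intro integral_le \<mu>_convolution_integrable[OF t] mult_left_mono)
       (auto intro!: continuous_intros yc)
  also have "\<dots> = integral {0..t}
      (\<lambda>s. C * exp ((\<gamma> - B) * t) * (\<mu> (t - s) * (exp (- \<gamma> * (t - s)) * exp (- B * s))))"
  proof (rule integral_cong)
    fix s
    have "exp (- B * (t - s)) * exp ((\<gamma> - B) * s) = exp ((\<gamma> - B) * t) * exp (- \<gamma> * (t - s))"
      by (simp add: exp_add[symmetric] algebra_simps)
    then show "\<mu> (t - s) * (exp (- B * (t - s)) * (C * exp ((\<gamma> - B) * s) * exp (- B * s)))
        = C * exp ((\<gamma> - B) * t) * (\<mu> (t - s) * (exp (- \<gamma> * (t - s)) * exp (- B * s)))"
      by (metis (no_types, lifting) mult.assoc mult.left_commute)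
  qed
  also have "\<dots> = C * exp ((\<gamma> - B) * t) * kernel_mass \<gamma> t"
    by (simp add: kernel_mass_def)
  finally show ?thesis .
qed

lemma kernel_mass_zero_le: "t \<ge> 0 \<Longrightarrow> kernel_mass 0 t \<le> N"
  using \<mu>_convolution_le by (simp add: kernel_mass_def)

lemma kernel_mass_le_split:
  assumes \<gamma>: "\<gamma> \<ge> 0" and a: "0 \<le> a" "a \<le> t"
  shows "kernel_mass \<gamma> t
    \<le> exp (- \<gamma> * (t - a)) * integral {0..a} (\<lambda>s. \<mu> (t - s) * exp (- B * s)) + integral {0..t - a} \<mu>"
proof -
  define f where "f s = \<mu> (t - s) * (exp (- \<gamma> * (t - s)) * exp (- B * s))" for s
  define g where "g s = \<mu> (t - s) * exp (- B * s)" for s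
  have fi: "f integrable_on {0..t}" and gi: "g integrable_on {0..t}"
    unfolding f_def g_def using a by (auto intro!: \<mu>_convolution_integrable continuous_intros)
  have "integral {0..a} f \<le> integral {0..a} (\<lambda>s. exp (- \<gamma> * (t - a)) * g s)"
  proof (rule integral_le)
    show "f integrable_on {0..a}" "(\<lambda>s. exp (- \<gamma> * (t - a)) * g s) integrable_on {0..a}"
      using integrable_subinterval_real[OF fi] integrable_subinterval_real[OF gi] a
      by (auto intro: integrable_on_mult_right)
    show "f s \<le> exp (- \<gamma> * (t - a)) * g s" if "s \<in> {0..a}" for s
      using that \<gamma> \<mu>_nonneg[of "t - s"]
      by (auto simp: f_def g_def mult_left_mono mult_right_mono mult.left_commute)
  qed
  moreover have "integral {a..t} f \<le> integral {a..t} (\<lambda>s. \<mu> (t - s))"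
  proof (rule integral_le)
    show "f integrable_on {a..t}" using integrable_subinterval_real[OF fi] a by auto
    show "(\<lambda>s. \<mu> (t - s)) integrable_on {a..t}" by (rule \<mu>_reflect(1)[OF a(2)])
    show "f s \<le> \<mu> (t - s)" if "s \<in> {a..t}" for s
    proof -
      have "exp (- \<gamma> * (t - s)) * exp (- B * s) \<le> 1 * 1"
        using that a \<gamma> B_nonneg by (intro mult_mono) auto
      then show ?thesis
        unfolding f_def using \<mu>_nonneg[of "t - s"] by (metis mult.right_neutral mult_left_mono)
    qed
  qed
  moreover have "kernel_mass \<gamma> t = integral {0..a} f + integral {a..t} f"
    unfolding kernel_mass_def f_def[symmetric]
    by (rule Henstock_Kurzweil_Integration.integral_combine[symmetric]) (use a fi in auto)
  ultimately show ?thesis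
    using \<mu>_reflect(2)[OF a(2)] by (simp add: g_def)
qed

text \<open>The extra damping \<open>exp(-\<gamma>(t - s))\<close> only matters away from the diagonal, while near it
  the integrability of \<open>\<mu>\<close> keeps the mass small, so the mass can be halved uniformly in \<open>t\<close>.\<close>

lemma exists_kernel_mass_le_half: "\<exists>\<gamma>\<ge>0. \<forall>t\<ge>0. kernel_mass \<gamma> t \<le> N / 2"
proof -
  obtain r where r: "r > 0" "\<And>x. 0 \<le> x \<Longrightarrow> x \<le> r \<Longrightarrow> integral {0..x} \<mu> < N / 4"
    using integral_\<mu>_small[of "N / 4"] N_pos by auto
  define \<gamma> where "\<gamma> = ln 4 / r"
  have \<gamma>: "\<gamma> \<ge> 0" using r(1) by (simp add: \<gamma>_def)
  have "kernel_mass \<gamma> t \<le> N / 2" if t: "t \<ge> 0" for t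
  proof (cases "t \<le> r")
    case True
    then show ?thesis
      using kernel_mass_le_split[OF \<gamma> order_refl t] r(2)[OF t True] N_pos by simp
  next
    case False
    define g where "g s = \<mu> (t - s) * exp (- B * s)" for s
    have "- \<gamma> * r = - ln 4" using r(1) by (simp add: \<gamma>_def)
    then have decay: "exp (- \<gamma> * r) = 1 / 4" by (simp add: exp_minus)
    have gi: "g integrable_on {0..t}"
      unfolding g_def by (rule \<mu>_convolution_integrable) (use t in \<open>auto intro!: continuous_intros\<close>)
    have "integral {0..t - r} g \<le> integral {0..t} g"
      using False r(1) \<mu>_nonneg integrable_subinterval_real[OF gi, of 0 "t - r"]
      by (intro integral_subset_le gi) (auto simp: g_def)
    also have "\<dots> \<le> N" using \<mu>_convolution_le[OF t] by (simp add: g_def[abs_def])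
    finally have "integral {0..t - r} g \<le> N" .
    moreover have "kernel_mass \<gamma> t \<le> exp (- \<gamma> * r) * integral {0..t - r} g + integral {0..r} \<mu>"
      using kernel_mass_le_split[OF \<gamma>, of "t - r" t] False r(1) by (simp add: g_def[abs_def])
    ultimately show ?thesis
      using r(2)[of r] r(1) unfolding decay by linarith
  qed
  then show ?thesis using \<gamma> by blast
qed

definition halving_rate :: real where
  "halving_rate = (SOME \<gamma>. \<gamma> \<ge> 0 \<and> (\<forall>t\<ge>0. kernel_mass \<gamma> t \<le> N / 2))"

lemma halving_rate: "halving_rate \<ge> 0" "t \<ge> 0 \<Longrightarrow> kernel_mass halving_rate t \<le> N / 2"
  using someI_ex[OF exists_kernel_mass_le_half] unfolding halving_rate_def by auto

end

locale mild_solution_setting = duhamel_kernel Sm \<mu> B N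
  for Sm :: "real \<Rightarrow> 'm::banach \<Rightarrow> 'f::banach" and \<mu> B N +
  fixes K E D :: real and Pb :: "'f \<Rightarrow> 'f \<Rightarrow> 'm" and \<xi> :: "real \<Rightarrow> 'm"
    and u0 :: "real \<Rightarrow> 'f" \<comment> \<open>the free evolution \<open>t \<mapsto> exp(tA) f0\<close>\<close>
    and \<phi>ap :: "real \<Rightarrow> 'f"
  assumes Pb_bilinear: "bilinear Pb" and K_pos: "K > 0"
    and norm_Pb_le: "\<And>f g. norm (Pb f g) \<le> K * norm f * norm g"
    and \<xi>_continuous: "continuous_on {0..} \<xi>"
    and u0_continuous: "continuous_on {0..} u0"
    and \<phi>ap_continuous: "continuous_on {0..} \<phi>ap"
    and E_nonneg: "E \<ge> 0" and D_nonneg: "D \<ge> 0"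
    and defect_le: "\<And>t. t \<ge> 0 \<Longrightarrow> norm (\<phi>ap t - u0 t
                     - integral {0..t} (\<lambda>s. Sm (t - s) (Pb (\<phi>ap s) (\<phi>ap s) + \<xi> s)))
                   \<le> E * exp (- B * t)"
    and norm_\<phi>ap_le: "\<And>t. t \<ge> 0 \<Longrightarrow> norm (\<phi>ap t) \<le> D * exp (- B * t)"
    and smallness: "2 * sqrt (K * N * E) + 2 * K * N * D \<le> 1"
begin

definition R :: real where
  "R = (1 - 2 * K * N * D - sqrt ((1 - 2 * K * N * D)\<^sup>2 - 4 * K * N * E)) / (2 * K * N)"

lemma R_nonneg: "R \<ge> 0"
  and R_quadratic: "E + K * N * (2 * D * R + R\<^sup>2) = R"
  and contraction_constant_le_1: "2 * K * N * (D + R) \<le> 1"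
proof -
  define q where "q = 1 - 2 * K * N * D"
  define s where "s = sqrt (q\<^sup>2 - 4 * K * N * E)"
  have KN: "K * N > 0" using K_pos N_pos by simp
  have KNE: "K * N * E \<ge> 0" using KN E_nonneg by simp
  have q: "2 * sqrt (K * N * E) \<le> q" using smallness by (simp add: q_def)
  then have "(2 * sqrt (K * N * E))\<^sup>2 \<le> q\<^sup>2" using KNE by (intro power_mono) auto
  then have discriminant: "4 * K * N * E \<le> q\<^sup>2"
    using KNE by (simp add: power_mult_distrib mult.assoc)
  have s0: "s \<ge> 0" and s2: "s * s = q * q - 4 * K * N * E"
    using discriminant by (simp_all add: s_def power2_eq_square[symmetric])
  have "4 * K * N * E \<ge> 0" using mult_nonneg_nonneg[of 4 "K * N * E"] KNE by (simp add: mult.assoc)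
  with s2 have "s\<^sup>2 \<le> q\<^sup>2" unfolding power2_eq_square by linarith
  moreover have "q \<ge> 0" using q real_sqrt_ge_zero[OF KNE] by linarith
  ultimately have "s \<le> q" by (rule power2_le_imp_le)
  have R_eq: "R = (q - s) / (2 * K * N)" by (simp add: R_def q_def s_def)
  then have RK: "2 * K * N * R = q - s" using K_pos N_pos by simp
  show "R \<ge> 0" using \<open>s \<le> q\<close> KN by (simp add: R_eq)
  have "4 * K * N * (K * N * R\<^sup>2 - q * R + E) = (2 * K * N * R)\<^sup>2 - 2 * q * (2 * K * N * R) + 4 * K * N * E"
    by (simp add: algebra_simps power2_eq_square)
  also have "\<dots> = 0" unfolding RK using s2 by (simp add: algebra_simps power2_eq_square)
  finally have "K * N * R\<^sup>2 - q * R + E = 0" using K_pos N_pos by simp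
  then show "E + K * N * (2 * D * R + R\<^sup>2) = R" by (simp add: q_def algebra_simps)
  show "2 * K * N * (D + R) \<le> 1" using RK s0 by (simp add: q_def distrib_left)
qed

definition nonlinearity :: "(real \<Rightarrow> 'f) \<Rightarrow> real \<Rightarrow> 'm" where
  "nonlinearity \<phi> s = Pb (\<phi> s) (\<phi> s) + \<xi> s"

definition mild_map :: "(real \<Rightarrow> 'f) \<Rightarrow> real \<Rightarrow> 'f" where
  "mild_map \<phi> t = u0 t + duhamel (nonlinearity \<phi>) t"

definition near_ap :: "(real \<Rightarrow> 'f) \<Rightarrow> bool" where
  "near_ap \<phi> \<longleftrightarrow> continuous_on {0..} \<phi> \<and> (\<forall>t\<ge>0. norm (\<phi> t - \<phi>ap t) \<le> R * exp (- B * t))"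

lemma bounded_bilinear_Pb: "bounded_bilinear Pb"
proof (rule bounded_bilinear.intro)
  show "\<exists>K. \<forall>a b. norm (Pb a b) \<le> norm a * norm b * K"
    using norm_Pb_le by (intro exI[of _ K]) (simp add: mult.commute mult.left_commute)
qed (simp_all add: bilinear_ladd[OF Pb_bilinear] bilinear_radd[OF Pb_bilinear]
      bilinear_lmul[OF Pb_bilinear] bilinear_rmul[OF Pb_bilinear])

lemma continuous_on_nonlinearity:
  "continuous_on {0..} \<phi> \<Longrightarrow> continuous_on {0..} (nonlinearity \<phi>)"
  unfolding nonlinearity_def[abs_def]
  by (intro continuous_on_add bounded_bilinear.continuous_on[OF bounded_bilinear_Pb] \<xi>_continuous)

lemma continuous_on_mild_map: "continuous_on {0..} \<phi> \<Longrightarrow> continuous_on {0..} (mild_map \<phi>)"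
  unfolding mild_map_def[abs_def]
  by (intro continuous_on_add u0_continuous continuous_on_duhamel continuous_on_nonlinearity)

lemma norm_Pb_diag_diff_le:
  assumes "norm (a - b) \<le> x" "norm a \<le> u" "norm b \<le> v"
  shows "norm (Pb a a - Pb b b) \<le> K * x * u + K * v * x"
proof -
  interpret bounded_bilinear Pb by (rule bounded_bilinear_Pb)
  have nonneg: "0 \<le> x" "0 \<le> v" using assms by (auto intro: order_trans[OF norm_ge_zero])
  have "Pb a a - Pb b b = Pb (a - b) a + Pb b (a - b)"
    by (simp add: diff_left diff_right)
  then have "norm (Pb a a - Pb b b) \<le> K * norm (a - b) * norm a + K * norm b * norm (a - b)"
    by (metis norm_Pb_le norm_triangle_le add_mono)
  also have "\<dots> \<le> K * x * u + K * v * x"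
    using assms K_pos nonneg by (intro add_mono mult_mono mult_left_mono) auto
  finally show ?thesis .
qed

lemma norm_near_ap_le: "near_ap \<phi> \<Longrightarrow> t \<ge> 0 \<Longrightarrow> norm (\<phi> t) \<le> (D + R) * exp (- B * t)"
  using norm_triangle_ineq[of "\<phi> t - \<phi>ap t" "\<phi>ap t"] norm_\<phi>ap_le[of t]
  by (auto simp: near_ap_def algebra_simps)

lemma norm_duhamel_nonlinearity_diff_le:
  assumes c: "continuous_on {0..} \<phi>1" "continuous_on {0..} \<phi>2" and t: "t \<ge> 0"
    and bound: "\<And>s. s \<in> {0..t} \<Longrightarrow> norm (nonlinearity \<phi>1 s - nonlinearity \<phi>2 s)
                 \<le> C * exp ((\<gamma> - B) * s) * exp (- B * s)"
  shows "norm (duhamel (nonlinearity \<phi>1) t - duhamel (nonlinearity \<phi>2) t)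
    \<le> C * exp ((\<gamma> - B) * t) * kernel_mass \<gamma> t"
proof -
  have "continuous_on {0..t} (nonlinearity \<phi>)" if "continuous_on {0..} \<phi>" for \<phi>
    by (rule continuous_on_subset[OF continuous_on_nonlinearity[OF that]]) auto
  with c have "duhamel (nonlinearity \<phi>1) t - duhamel (nonlinearity \<phi>2) t
      = duhamel (\<lambda>s. nonlinearity \<phi>1 s - nonlinearity \<phi>2 s) t"
    and "continuous_on {0..t} (\<lambda>s. nonlinearity \<phi>1 s - nonlinearity \<phi>2 s)"
    by (auto intro: duhamel_diff[OF t] continuous_on_diff)
  then show ?thesis
    using norm_duhamel_le_kernel_mass[OF t _ bound] by simp
qed

lemma near_ap_mild_map:
  assumes near: "near_ap \<phi>"
  shows "near_ap (mild_map \<phi>)"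
  unfolding near_ap_def
proof (intro conjI allI impI)
  have c: "continuous_on {0..} \<phi>" using near by (simp add: near_ap_def)
  then show "continuous_on {0..} (mild_map \<phi>)" by (rule continuous_on_mild_map)
  fix t :: real assume t: "t \<ge> 0"
  define C where "C = K * (2 * D * R + R\<^sup>2)"
  have C0: "C \<ge> 0" using K_pos D_nonneg R_nonneg by (simp add: C_def)
  have "norm (nonlinearity \<phi> s - nonlinearity \<phi>ap s) \<le> C * exp ((0 - B) * s) * exp (- B * s)"
    if "s \<in> {0..t}" for s
  proof -
    have "norm (nonlinearity \<phi> s - nonlinearity \<phi>ap s)
        \<le> K * (R * exp (- B * s)) * ((D + R) * exp (- B * s)) + K * (D * exp (- B * s)) * (R * exp (- B * s))"
      unfolding nonlinearity_def add_diff_add diff_self add_0_right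
      using near that norm_near_ap_le[OF near] norm_\<phi>ap_le
      by (intro norm_Pb_diag_diff_le) (auto simp: near_ap_def)
    also have "\<dots> = C * exp ((0 - B) * s) * exp (- B * s)"
      by (simp add: C_def algebra_simps power2_eq_square)
    finally show ?thesis .
  qed
  then have "norm (duhamel (nonlinearity \<phi>) t - duhamel (nonlinearity \<phi>ap) t)
      \<le> C * exp ((0 - B) * t) * kernel_mass 0 t"
    by (rule norm_duhamel_nonlinearity_diff_le[OF c \<phi>ap_continuous t])
  also have "\<dots> \<le> C * exp ((0 - B) * t) * N"
    using kernel_mass_zero_le[OF t] C0 by (intro mult_left_mono) auto
  finally have nonlinear_part: "norm (duhamel (nonlinearity \<phi>) t - duhamel (nonlinearity \<phi>ap) t)
      \<le> C * exp ((0 - B) * t) * N" .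
  have defect: "norm (\<phi>ap t - u0 t - duhamel (nonlinearity \<phi>ap) t) \<le> E * exp (- B * t)"
    using defect_le[OF t] by (simp add: duhamel_def nonlinearity_def)
  have "mild_map \<phi> t - \<phi>ap t = (duhamel (nonlinearity \<phi>) t - duhamel (nonlinearity \<phi>ap) t)
      - (\<phi>ap t - u0 t - duhamel (nonlinearity \<phi>ap) t)"
    by (simp add: mild_map_def)
  then have "norm (mild_map \<phi> t - \<phi>ap t)
      \<le> norm (duhamel (nonlinearity \<phi>) t - duhamel (nonlinearity \<phi>ap) t)
        + norm (\<phi>ap t - u0 t - duhamel (nonlinearity \<phi>ap) t)"
    by (simp only: norm_triangle_ineq4)
  also have "\<dots> \<le> C * exp ((0 - B) * t) * N + E * exp (- B * t)"
    using nonlinear_part defect by (rule add_mono)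
  also have "\<dots> = (E + K * N * (2 * D * R + R\<^sup>2)) * exp (- B * t)"
    by (simp add: C_def algebra_simps)
  also have "\<dots> = R * exp (- B * t)"
    by (simp only: R_quadratic)
  finally show "norm (mild_map \<phi> t - \<phi>ap t) \<le> R * exp (- B * t)" .
qed

lemma mild_map_contraction:
  assumes near: "near_ap \<phi>1" "near_ap \<phi>2" and d: "d \<ge> 0"
    and dist: "\<And>s. s \<ge> 0 \<Longrightarrow> norm (\<phi>1 s - \<phi>2 s) \<le> d * exp ((halving_rate - B) * s)"
    and t: "t \<ge> 0"
  shows "norm (mild_map \<phi>1 t - mild_map \<phi>2 t) \<le> d / 2 * exp ((halving_rate - B) * t)"
proof -
  define C where "C = 2 * K * (D + R) * d"
  have C0: "C \<ge> 0" using K_pos D_nonneg R_nonneg d by (simp add: C_def)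
  have "norm (nonlinearity \<phi>1 s - nonlinearity \<phi>2 s) \<le> C * exp ((halving_rate - B) * s) * exp (- B * s)"
    if "s \<in> {0..t}" for s
  proof -
    have "norm (nonlinearity \<phi>1 s - nonlinearity \<phi>2 s)
        \<le> K * (d * exp ((halving_rate - B) * s)) * ((D + R) * exp (- B * s))
          + K * ((D + R) * exp (- B * s)) * (d * exp ((halving_rate - B) * s))"
      unfolding nonlinearity_def add_diff_add diff_self add_0_right
      using that norm_near_ap_le[OF near(1)] norm_near_ap_le[OF near(2)] dist
      by (intro norm_Pb_diag_diff_le) auto
    also have "\<dots> = C * exp ((halving_rate - B) * s) * exp (- B * s)"
      by (simp add: C_def algebra_simps)
    finally show ?thesis .
  qed
  then have "norm (mild_map \<phi>1 t - mild_map \<phi>2 t)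
      \<le> C * exp ((halving_rate - B) * t) * kernel_mass halving_rate t"
    using norm_duhamel_nonlinearity_diff_le near t unfolding mild_map_def near_ap_def by simp
  also have "\<dots> \<le> C * exp ((halving_rate - B) * t) * (N / 2)"
    using halving_rate(2)[OF t] C0 by (intro mult_left_mono) auto
  also have "\<dots> = (2 * K * N * (D + R)) * (d / 2 * exp ((halving_rate - B) * t))"
    by (simp add: C_def algebra_simps)
  also have "\<dots> \<le> d / 2 * exp ((halving_rate - B) * t)"
    using contraction_constant_le_1 d K_pos N_pos D_nonneg R_nonneg
    by (intro mult_left_le_one_le) auto
  finally show ?thesis .
qed

lemma near_ap_iterate: "near_ap ((mild_map ^^ n) \<phi>ap)"
proof (induction n)
  case 0
  show ?case using \<phi>ap_continuous R_nonneg by (simp add: near_ap_def)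
next
  case (Suc n)
  then show ?case by (simp add: near_ap_mild_map)
qed

lemma norm_iterate_increment_le:
  assumes "t \<ge> 0"
  shows "norm ((mild_map ^^ Suc n) \<phi>ap t - (mild_map ^^ n) \<phi>ap t)
    \<le> R * (1/2)^n * exp ((halving_rate - B) * t)"
  using assms
proof (induction n arbitrary: t)
  case 0
  have "R * exp (- B * t) \<le> R * exp ((halving_rate - B) * t)"
    using 0 halving_rate(1) R_nonneg by (intro mult_left_mono) (auto simp: algebra_simps)
  then show ?case
    using near_ap_iterate[of 1] 0 by (auto simp: near_ap_def)
next
  case (Suc n)
  show ?case
    using mild_map_contraction[OF near_ap_iterate near_ap_iterate _ Suc.IH Suc.prems] R_nonneg
    by (simp add: mult.assoc)
qed

definition picard_limit :: "real \<Rightarrow> 'f" where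
  "picard_limit t = lim (\<lambda>n. (mild_map ^^ n) \<phi>ap t)"

lemma picard_limit_convergence:
  assumes t: "t \<ge> 0"
  shows "(\<lambda>n. (mild_map ^^ n) \<phi>ap t) \<longlonglongrightarrow> picard_limit t"
    and "norm ((mild_map ^^ n) \<phi>ap t - picard_limit t) \<le> 2 * R * (1/2)^n * exp ((halving_rate - B) * t)"
proof -
  have "norm ((mild_map ^^ Suc n) \<phi>ap t - (mild_map ^^ n) \<phi>ap t)
      \<le> R * exp ((halving_rate - B) * t) * (1/2)^n" for n
    using norm_iterate_increment_le[OF t, of n] by (simp only: mult_ac)
  from geometric_increments_limit[OF this] obtain L
    where L: "(\<lambda>n. (mild_map ^^ n) \<phi>ap t) \<longlonglongrightarrow> L"
      "\<forall>n. norm ((mild_map ^^ n) \<phi>ap t - L) \<le> 2 * (R * exp ((halving_rate - B) * t)) * (1/2)^n"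
    by blast
  moreover have "picard_limit t = L" unfolding picard_limit_def using L(1) by (rule limI)
  ultimately show "(\<lambda>n. (mild_map ^^ n) \<phi>ap t) \<longlonglongrightarrow> picard_limit t"
    and "norm ((mild_map ^^ n) \<phi>ap t - picard_limit t) \<le> 2 * R * (1/2)^n * exp ((halving_rate - B) * t)"
    by (simp_all add: mult_ac)
qed

lemma continuous_on_picard_limit: "continuous_on {0..} picard_limit"
proof (rule continuous_on_atLeast_if_Icc)
  fix T :: real assume "T \<ge> 0"
  have "dist ((mild_map ^^ n) \<phi>ap x) (picard_limit x)
      \<le> 2 * R * (1/2)^n * exp (\<bar>halving_rate - B\<bar> * T)" if x: "x \<in> {0..T}" for n x
  proof -
    have "(halving_rate - B) * x \<le> \<bar>halving_rate - B\<bar> * T"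
      using x by (intro mult_mono) auto
    then have "2 * R * (1/2)^n * exp ((halving_rate - B) * x)
        \<le> 2 * R * (1/2)^n * exp (\<bar>halving_rate - B\<bar> * T)"
      using R_nonneg by (intro mult_left_mono) auto
    with picard_limit_convergence(2)[of x n] x show ?thesis
      unfolding dist_norm by (meson atLeastAtMost_iff order_trans)
  qed
  moreover have "(\<lambda>n. 2 * R * (1/2::real)^n * exp (\<bar>halving_rate - B\<bar> * T)) \<longlonglongrightarrow> 0"
    by (intro tendsto_mult_left_zero tendsto_mult_right_zero LIMSEQ_power_zero) simp
  ultimately have "uniform_limit {0..T} (\<lambda>n. (mild_map ^^ n) \<phi>ap) picard_limit sequentially"
    by (rule uniform_limit_if_dist_le)
  moreover have "continuous_on {0..T} ((mild_map ^^ n) \<phi>ap)" for n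
    by (rule continuous_on_subset[of "{0..}"])
       (use near_ap_iterate[of n] in \<open>auto simp: near_ap_def\<close>)
  ultimately show "continuous_on {0..T} picard_limit"
    by (intro uniform_limit_theorem[of _ "\<lambda>n. (mild_map ^^ n) \<phi>ap"]) auto
qed

lemma near_ap_picard_limit: "near_ap picard_limit"
  unfolding near_ap_def
proof (intro conjI allI impI continuous_on_picard_limit)
  fix t :: real assume t: "t \<ge> 0"
  show "norm (picard_limit t - \<phi>ap t) \<le> R * exp (- B * t)"
    using near_ap_iterate t
    by (intro LIMSEQ_le_const2[OF tendsto_norm[OF tendsto_diff[OF picard_limit_convergence(1)[OF t]
          tendsto_const]]]) (auto simp: near_ap_def)
qed

lemma mild_map_picard_limit:
  assumes t: "t \<ge> 0"
  shows "mild_map picard_limit t = picard_limit t"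
proof -
  have "norm ((mild_map ^^ Suc n) \<phi>ap t - mild_map picard_limit t)
      \<le> (2 * R * (1/2)^n) / 2 * exp ((halving_rate - B) * t)" for n
    using mild_map_contraction[OF near_ap_iterate near_ap_picard_limit _ picard_limit_convergence(2) t]
      R_nonneg by simp
  then have "(\<lambda>n. (mild_map ^^ Suc n) \<phi>ap t - mild_map picard_limit t) \<longlonglongrightarrow> 0"
  proof (rule Lim_null_comparison[OF always_eventually, OF allI])
    show "(\<lambda>n. (2 * R * (1/2::real)^n) / 2 * exp ((halving_rate - B) * t)) \<longlonglongrightarrow> 0"
      by (intro tendsto_mult_left_zero tendsto_divide_zero tendsto_mult_right_zero LIMSEQ_power_zero) simp
  qed
  then have "(\<lambda>n. (mild_map ^^ Suc n) \<phi>ap t) \<longlonglongrightarrow> mild_map picard_limit t"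
    by (rule LIM_zero_cancel)
  then show ?thesis
    using LIMSEQ_unique LIMSEQ_Suc[OF picard_limit_convergence(1)[OF t]] by blast
qed

lemma exists_mild_solution:
  "\<exists>\<phi>. continuous_on {0..} \<phi> \<and>
     (\<forall>t\<ge>0. (\<lambda>s. Sm (t - s) (Pb (\<phi> s) (\<phi> s) + \<xi> s)) integrable_on {0..t} \<and>
             \<phi> t = u0 t + integral {0..t} (\<lambda>s. Sm (t - s) (Pb (\<phi> s) (\<phi> s) + \<xi> s))) \<and>
     (\<forall>t\<ge>0. norm (\<phi> t - \<phi>ap t) \<le> R * exp (- B * t))"
proof (intro exI[of _ picard_limit] conjI allI impI continuous_on_picard_limit)
  fix t :: real assume t: "t \<ge> 0"
  have "(\<lambda>s. Sm (t - s) (nonlinearity picard_limit s)) integrable_on {0..t}"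
    using t by (intro Sm_convolution_dominated(1)
        continuous_on_subset[OF continuous_on_nonlinearity[OF continuous_on_picard_limit]]) auto
  then show "(\<lambda>s. Sm (t - s) (Pb (picard_limit s) (picard_limit s) + \<xi> s)) integrable_on {0..t}"
    by (simp add: nonlinearity_def)
  show "picard_limit t = u0 t + integral {0..t}
      (\<lambda>s. Sm (t - s) (Pb (picard_limit s) (picard_limit s) + \<xi> s))"
    using mild_map_picard_limit[OF t] by (simp add: mild_map_def duhamel_def nonlinearity_def)
  show "norm (picard_limit t - \<phi>ap t) \<le> R * exp (- B * t)"
    using near_ap_picard_limit t by (simp add: near_ap_def)
qed

end

theorem proposition5p10:
  fixes iP :: "'p::banach \<Rightarrow> 'f::banach"
    and iF :: "'f \<Rightarrow> 'm::banach"
    and A :: "'p \<Rightarrow> 'm"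
    and T :: "real \<Rightarrow> 'm \<Rightarrow> 'm"
    and SF :: "real \<Rightarrow> 'f \<Rightarrow> 'f"
    and Sm :: "real \<Rightarrow> 'm \<Rightarrow> 'f"
    and B N K \<sigma> Ec Dc :: real
    and \<mu> :: "real \<Rightarrow> real"
    and Pb :: "'f \<Rightarrow> 'f \<Rightarrow> 'm"
    and \<xi> :: "real \<Rightarrow> 'm"
    and f0 :: 'f
    and \<phi>ap :: "real \<Rightarrow> 'f"
  assumes emb_P: "dense_embedding iP"
    and emb_F: "dense_embedding iF"
    and A_lin: "linear A"
    and A_norm: "\<exists>c C. c > 0 \<and> C > 0 \<and> (\<forall>p. c * norm p \<le> norm (iF (iP p)) + norm (A p)
                    \<and> norm (iF (iP p)) + norm (A p) \<le> C * norm p)"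
    and T_sg: "strongly_continuous_semigroup T"
    and T_gen: "is_generator T (iF \<circ> iP) A"
    and SF_def: "\<forall>t\<ge>0. \<forall>f. iF (SF t f) = T t (iF f)"
    and SF_cont: "continuous_on (UNIV \<times> {0..}) (\<lambda>(f, t). SF t f)"
    and Sm_def: "\<forall>t>0. \<forall>g. iF (Sm t g) = T t g"
    and Sm_cont: "continuous_on (UNIV \<times> {0<..}) (\<lambda>(g, t). Sm t g)"
    and B_nonneg: "B \<ge> 0"
    and N_pos: "N > 0"
    and SF_est: "\<forall>t\<ge>0. \<forall>f. norm (SF t f) \<le> exp (- B * t) * norm f"
    and Sm_est: "\<forall>t>0. \<forall>g. norm (Sm t g) \<le> \<mu> t * exp (- B * t) * norm g"
    and \<mu>_cont: "continuous_on {0<..} \<mu>"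
    and \<mu>_pos: "\<forall>t>0. \<mu> t > 0"
    and \<sigma>_range: "0 < \<sigma>" "\<sigma> \<le> 1"
    and \<mu>_bigO: "\<mu> \<in> O[at_right 0](\<lambda>t. t powr (- (1 - \<sigma>)))"
    and \<mu>_int: "\<forall>t\<ge>0. integral {0..t} (\<lambda>s. \<mu> (t - s) * exp (- B * s)) \<le> N"
    and Pb_bilinear: "bilinear Pb"
    and K_pos: "K > 0"
    and Pb_bound: "\<forall>f g. norm (Pb f g) \<le> K * norm f * norm g"
    and \<xi>_loclip: "\<forall>T'\<ge>0. \<exists>L. L-lipschitz_on {0..T'} \<xi>"
    and \<phi>ap_cont: "continuous_on {0..} \<phi>ap"
    and Ec_nonneg: "Ec \<ge> 0"
    and Dc_nonneg: "Dc \<ge> 0"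
    and err_bound: "\<forall>t\<ge>0. norm (\<phi>ap t - SF t f0
                      - integral {0..t} (\<lambda>s. Sm (t - s) (Pb (\<phi>ap s) (\<phi>ap s) + \<xi> s)))
                    \<le> Ec * exp (- B * t)"
    and ap_bound: "\<forall>t\<ge>0. norm (\<phi>ap t) \<le> Dc * exp (- B * t)"
    and smallness: "2 * sqrt (K * N * Ec) + 2 * K * N * Dc \<le> 1"
  shows "\<exists>\<phi> :: real \<Rightarrow> 'f. continuous_on {0..} \<phi> \<and>
           (\<forall>t\<ge>0. (\<lambda>s. Sm (t - s) (Pb (\<phi> s) (\<phi> s) + \<xi> s)) integrable_on {0..t} \<and>
                   \<phi> t = SF t f0 + integral {0..t} (\<lambda>s. Sm (t - s) (Pb (\<phi> s) (\<phi> s) + \<xi> s))) \<and>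
           (\<forall>t\<ge>0. norm (\<phi> t - \<phi>ap t)
              \<le> ((1 - 2 * K * N * Dc - sqrt ((1 - 2 * K * N * Dc)\<^sup>2 - 4 * K * N * Ec))
                   / (2 * K * N)) * exp (- B * t))"
proof -
  \<comment> \<open>\<open>\<mu>\<close> is only known to be positive on \<open>(0, \<infinity>)\<close>; setting it to zero elsewhere gives a nonnegative kernel.\<close>
  define \<mu>0 where "\<mu>0 r = (if 0 < r then \<mu> r else 0)" for r
  have \<mu>0_continuous: "continuous_on {0<..} \<mu>0"
    by (rule continuous_on_eq[OF \<mu>_cont]) (simp add: \<mu>0_def)
  have \<mu>0_integrable: "\<mu>0 integrable_on {0..a}" if "a \<ge> 0" for a
    by (rule integrable_spike[OF integrable_on_Icc_if_bigo_powr[OF \<mu>_bigO \<mu>_cont \<sigma>_range(1) that],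
          of "{0}"]) (auto simp: \<mu>0_def)
  have \<mu>0_convolution: "integral {0..t} (\<lambda>s. \<mu>0 (t - s) * exp (- B * s))
      = integral {0..t} (\<lambda>s. \<mu> (t - s) * exp (- B * s))" for t
    by (rule integral_spike[of "{t}"]) (auto simp: \<mu>0_def)
  have Sm_lin: "linear (Sm t)" if "t > 0" for t
    using emb_F T_sg Sm_def that
    by (intro linear_if_inj_comp_linear[of iF "T t" "Sm t"])
       (auto simp: dense_embedding_def strongly_continuous_semigroup_def bounded_linear.linear)
  have "continuous_on {0..} (\<lambda>t. (\<lambda>(f, t). SF t f) (f0, t))"
    by (rule continuous_on_compose2[OF SF_cont]) (auto intro!: continuous_intros)
  then have u0_continuous: "continuous_on {0..} (\<lambda>t. SF t f0)" by simp
  have \<xi>_continuous: "continuous_on {0..} \<xi>"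
    using \<xi>_loclip by (intro continuous_on_atLeast_if_Icc) (meson lipschitz_on_continuous_on)
  interpret mild_solution_setting Sm \<mu>0 B N K Ec Dc Pb \<xi> "\<lambda>t. SF t f0" \<phi>ap
    by (intro mild_solution_setting.intro duhamel_kernel.intro mild_solution_setting_axioms.intro)
      (use Sm_lin Sm_cont Sm_est \<mu>0_continuous \<mu>0_integrable \<mu>_pos B_nonneg N_pos \<mu>_int
        \<mu>0_convolution Pb_bilinear K_pos Pb_bound \<xi>_continuous u0_continuous \<phi>ap_cont
        Ec_nonneg Dc_nonneg err_bound ap_bound smallness in \<open>auto simp: \<mu>0_def less_imp_le\<close>)
  show ?thesis using exists_mild_solution unfolding R_def .
qed

end
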